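(* For every integer $n \geq 2$, $$\left\lceil \frac{3n-1}{4} \right\rceil - 1 \leq \operatorname{adim}(P_2 \square P_n) \leq \left\lceil \frac{3n-1}{4} \right\rceil.$$
   Context: All graphs are finite, simple and undirected. $P_n$ is the path on $n$ vertices and $\square$ is the Cartesian product of graphs: $V(G_1\square G_2)=V(G_1)\times V(G_2)$, and $(u,u')$ is adjacent to $(v,v')$ iff either $u=v$ and $u'v'\in E(G_2)$, or $u'=v'$ and $uv\in E(G_1)$. For a graph $G$, $d(u,v)$ is the shortest-path distance ($\infty$ if $u,v$ lie in different components), and $d_1(u,v)=\min(d(u,v),2)$. A set $A\subseteq V(G)$ is an adjacency resolving set if for all distinct $x,y\in V(G)$ there is $z\in A$ with $d_1(z,x)\neq d_1(z,y)$. The adjacency dimension $\operatorname{adim}(G)$ is the minimum cardinality of an adjacency resolving set. *)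

theory Defs
  imports Main "HOL-Library.Extended_Nat"
begin

definition simple_graph :: "'a set \<Rightarrow> ('a \<Rightarrow> 'a \<Rightarrow> bool) \<Rightarrow> bool" where
  "simple_graph V E \<longleftrightarrow> finite V \<and> (\<forall>u v. E u v \<longrightarrow> u \<in> V \<and> v \<in> V)
     \<and> (\<forall>u v. E u v \<longrightarrow> E v u) \<and> (\<forall>v. \<not> E v v)"

definition walk :: "'a set \<Rightarrow> ('a \<Rightarrow> 'a \<Rightarrow> bool) \<Rightarrow> nat \<Rightarrow> 'a \<Rightarrow> 'a \<Rightarrow> bool" where
  "walk V E k u v \<longleftrightarrow> (\<exists>p :: nat \<Rightarrow> 'a. p 0 = u \<and> p k = v \<and> (\<forall>i\<le>k. p i \<in> V)
       \<and> (\<forall>i<k. E (p i) (p (Suc i))))"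

definition dist :: "'a set \<Rightarrow> ('a \<Rightarrow> 'a \<Rightarrow> bool) \<Rightarrow> 'a \<Rightarrow> 'a \<Rightarrow> enat" where
  "dist V E u v = (if \<exists>k. walk V E k u v then enat (LEAST k. walk V E k u v) else \<infinity>)"

definition dist1 :: "'a set \<Rightarrow> ('a \<Rightarrow> 'a \<Rightarrow> bool) \<Rightarrow> 'a \<Rightarrow> 'a \<Rightarrow> enat" where
  "dist1 V E u v = min (dist V E u v) 2"

definition adj_resolving :: "'a set \<Rightarrow> ('a \<Rightarrow> 'a \<Rightarrow> bool) \<Rightarrow> 'a set \<Rightarrow> bool" where
  "adj_resolving V E A \<longleftrightarrow> A \<subseteq> V \<and>
     (\<forall>x\<in>V. \<forall>y\<in>V. x \<noteq> y \<longrightarrow> (\<exists>z\<in>A. dist1 V E z x \<noteq> dist1 V E z y))"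

definition adim :: "'a set \<Rightarrow> ('a \<Rightarrow> 'a \<Rightarrow> bool) \<Rightarrow> nat" where
  "adim V E = (LEAST k. \<exists>A. adj_resolving V E A \<and> card A = k)"

definition path_V :: "nat \<Rightarrow> nat set" where
  "path_V n = {0..<n}"

definition path_E :: "nat \<Rightarrow> nat \<Rightarrow> nat \<Rightarrow> bool" where
  "path_E n i j \<longleftrightarrow> i < n \<and> j < n \<and> (i = Suc j \<or> j = Suc i)"

definition cart_V :: "'a set \<Rightarrow> 'b set \<Rightarrow> ('a \<times> 'b) set" where
  "cart_V V1 V2 = V1 \<times> V2"

definition cart_E :: "'a set \<Rightarrow> ('a \<Rightarrow> 'a \<Rightarrow> bool) \<Rightarrow> 'b set \<Rightarrow> ('b \<Rightarrow> 'b \<Rightarrow> bool)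
    \<Rightarrow> 'a \<times> 'b \<Rightarrow> 'a \<times> 'b \<Rightarrow> bool" where
  "cart_E V1 E1 V2 E2 x y \<longleftrightarrow> x \<in> V1 \<times> V2 \<and> y \<in> V1 \<times> V2 \<and>
     ((fst x = fst y \<and> E2 (snd x) (snd y)) \<or> (snd x = snd y \<and> E1 (fst x) (fst y)))"

end

theory Submission
  imports Defs
begin

(* A set A is adjacency resolving iff the traces N(x) \<inter> A of the vertices x outside A are
   pairwise distinct.  In the ladder P_2 \<box> P_n two vertices sharing a neighbour are at distance
   two, so apart from empty traces this is a condition on windows of five consecutive columns.

   Lower bound: at most one trace is empty; adding that vertex gives a locating-dominating set.
   Coding each column by the rows it meets, a potential function on four consecutive columns,
   checked on all admissible windows, shows 4 |A| \<ge> 3 n + 1 for locating-dominating sets.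

   Upper bound: repeating the pattern 1 0 3 0 2 0 3 0 (with a short base word for the remaining
   columns) gives a set of (3 n + 2) div 4 vertices whose windows are checked in the same way. *)

section \<open>Traces and adjacency resolving sets\<close>

definition trace :: "('a \<Rightarrow> 'a \<Rightarrow> bool) \<Rightarrow> 'a set \<Rightarrow> 'a \<Rightarrow> 'a set" where
  "trace E A x = {z \<in> A. E z x}"

definition separated :: "('a \<Rightarrow> 'a \<Rightarrow> bool) \<Rightarrow> 'a set \<Rightarrow> 'a \<Rightarrow> 'a \<Rightarrow> bool" where
  "separated E A x y \<longleftrightarrow> (trace E A x = trace E A y \<longrightarrow> trace E A x = {})"

definition locating_dominating :: "'a set \<Rightarrow> ('a \<Rightarrow> 'a \<Rightarrow> bool) \<Rightarrow> 'a set \<Rightarrow> bool" where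
  "locating_dominating V E A \<longleftrightarrow>
     A \<subseteq> V \<and> inj_on (trace E A) (V - A) \<and> (\<forall>x\<in>V - A. trace E A x \<noteq> {})"

lemma walk_0_iff: "walk V E 0 u v \<longleftrightarrow> u = v \<and> u \<in> V"
  unfolding walk_def by (auto intro!: exI[of _ "\<lambda>_. u"])

lemma walk_1_iff:
  assumes closed: "\<And>u v. E u v \<Longrightarrow> u \<in> V \<and> v \<in> V"
  shows "walk V E 1 u v \<longleftrightarrow> E u v"
proof
  assume "walk V E 1 u v"
  then show "E u v" unfolding walk_def by fastforce
next
  assume "E u v"
  then show "walk V E 1 u v"
    unfolding walk_def using closed[of u v]
    by (intro exI[of _ "\<lambda>i. if i = 0 then u else v"]) (auto simp: le_Suc_eq)
qed

lemma dist1_eq: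
  assumes closed: "\<And>u v. E u v \<Longrightarrow> u \<in> V \<and> v \<in> V" and irrefl: "\<And>v. \<not> E v v"
    and "u \<in> V"
  shows "dist1 V E u v = (if u = v then 0 else if E u v then 1 else 2)"
proof -
  have walk_0: "walk V E 0 u v \<longleftrightarrow> u = v" using \<open>u \<in> V\<close> by (simp add: walk_0_iff)
  have walk_1: "walk V E 1 u v \<longleftrightarrow> E u v" using closed by (rule walk_1_iff)
  consider "u = v" | "u \<noteq> v" "E u v" | "u \<noteq> v" "\<not> E u v" by blast
  then show ?thesis
  proof cases
    case 1
    then have "dist V E u v = 0" using walk_0 by (auto simp: dist_def Least_eq_0 zero_enat_def)
    then show ?thesis using 1 by (simp add: dist1_def)
  next
    case 2
    have "(LEAST k. walk V E k u v) = 1"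
    proof (rule Least_equality)
      show "walk V E 1 u v" using 2 walk_1 by simp
    next
      fix k assume "walk V E k u v"
      then show "1 \<le> k" using 2 walk_0 by (cases k) auto
    qed
    then show ?thesis using 2 walk_1 by (auto simp: dist1_def dist_def one_enat_def numeral_eq_enat)
  next
    case 3
    have "2 \<le> k" if "walk V E k u v" for k
    proof -
      have "k \<noteq> 0" using that 3 walk_0 by metis
      moreover have "k \<noteq> 1" using that 3 walk_1 by metis
      ultimately show ?thesis by linarith
    qed
    then have "2 \<le> dist V E u v"
      unfolding dist_def using LeastI_ex[of "\<lambda>k. walk V E k u v"] by (auto simp: numeral_eq_enat)
    then show ?thesis using 3 by (simp add: dist1_def min_def)
  qed
qed

lemma adj_resolving_iff_inj_trace:
  assumes closed: "\<And>u v. E u v \<Longrightarrow> u \<in> V \<and> v \<in> V" and irrefl: "\<And>v. \<not> E v v"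
  shows "adj_resolving V E A \<longleftrightarrow> A \<subseteq> V \<and> inj_on (trace E A) (V - A)"
proof (cases "A \<subseteq> V")
  case True
  have dist1_A: "dist1 V E z x = (if z = x then 0 else if E z x then 1 else 2)" if "z \<in> A" for z x
    using True that by (intro dist1_eq[OF closed irrefl]) auto
  have outside: "(\<exists>z\<in>A. dist1 V E z x \<noteq> dist1 V E z y) \<longleftrightarrow> trace E A x \<noteq> trace E A y"
    if "x \<in> V - A" "y \<in> V - A" for x y
  proof -
    have "dist1 V E z x \<noteq> dist1 V E z y \<longleftrightarrow> E z x \<noteq> E z y" if "z \<in> A" for z
      using that \<open>x \<in> V - A\<close> \<open>y \<in> V - A\<close> by (auto simp: dist1_A)
    then show ?thesis unfolding trace_def by blast
  qed
  have inside: "\<exists>z\<in>A. dist1 V E z x \<noteq> dist1 V E z y" if "x \<noteq> y" "x \<in> A \<or> y \<in> A" for x y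
    using that by (auto simp: dist1_A)
  show ?thesis
    unfolding adj_resolving_def inj_on_def
  proof (intro iffI conjI True ballI impI; (elim conjE)?)
    fix x y
    assume "\<forall>x\<in>V. \<forall>y\<in>V. x \<noteq> y \<longrightarrow> (\<exists>z\<in>A. dist1 V E z x \<noteq> dist1 V E z y)"
      and "x \<in> V - A" "y \<in> V - A" "trace E A x = trace E A y"
    then show "x = y" using outside by blast
  next
    fix x y
    assume "\<forall>x\<in>V - A. \<forall>y\<in>V - A. trace E A x = trace E A y \<longrightarrow> x = y"
      and "x \<in> V" "y \<in> V" "x \<noteq> y"
    then show "\<exists>z\<in>A. dist1 V E z x \<noteq> dist1 V E z y" using outside inside by blast
  qed
qed (simp add: adj_resolving_def)

lemma adim_le_card: "adj_resolving V E A \<Longrightarrow> adim V E \<le> card A"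
  unfolding adim_def by (rule Least_le) blast

lemma adim_attained:
  assumes closed: "\<And>u v. E u v \<Longrightarrow> u \<in> V \<and> v \<in> V" and irrefl: "\<And>v. \<not> E v v"
  obtains A where "adj_resolving V E A" "card A = adim V E"
proof -
  have "adj_resolving V E V" by (simp add: adj_resolving_iff_inj_trace[OF closed irrefl])
  then have "\<exists>k A. adj_resolving V E A \<and> card A = k" by blast
  then have "\<exists>A. adj_resolving V E A \<and> card A = adim V E"
    unfolding adim_def by (rule LeastI_ex[where P = "\<lambda>k. \<exists>A. adj_resolving V E A \<and> card A = k"])
  then show ?thesis using that by blast
qed

lemma locating_dominating_extension:
  assumes "A \<subseteq> V" "finite A" and inj: "inj_on (trace E A) (V - A)"
  obtains B where "locating_dominating V E B" "card B \<le> card A + 1"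
proof (cases "\<exists>b\<in>V - A. trace E A b = {}")
  case True
  then obtain b where b: "b \<in> V - A" "trace E A b = {}" by blast
  let ?B = "insert b A"
  have trace_A: "trace E A x = trace E ?B x - {b}" for x
    using b(1) unfolding trace_def by auto
  have "inj_on (trace E ?B) (V - ?B)"
    using inj by (auto simp: inj_on_def trace_A)
  moreover have "trace E ?B x \<noteq> {}" if "x \<in> V - ?B" for x
  proof
    assume "trace E ?B x = {}"
    then have "trace E A x = trace E A b" using b(2) by (simp add: trace_A)
    then show False using inj b(1) that by (auto simp: inj_on_def)
  qed
  ultimately show ?thesis
    using that[of ?B] assms(1,2) b(1) by (auto simp: locating_dominating_def card_insert_if)
next
  case False
  then show ?thesis using that[of A] assms by (auto simp: locating_dominating_def)
qed

section \<open>The ladder\<close>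

abbreviation ladder_V :: "nat \<Rightarrow> (nat \<times> nat) set" where
  "ladder_V n \<equiv> cart_V (path_V 2) (path_V n)"

abbreviation ladder_E :: "nat \<Rightarrow> nat \<times> nat \<Rightarrow> nat \<times> nat \<Rightarrow> bool" where
  "ladder_E n \<equiv> cart_E (path_V 2) (path_E 2) (path_V n) (path_E n)"

lemma ladder_V_eq: "ladder_V n = {..<2} \<times> {..<n}"
  by (simp add: cart_V_def path_V_def atLeast0LessThan)

lemma ladder_E_iff:
  "ladder_E n (a, b) (c, d) \<longleftrightarrow> a < 2 \<and> b < n \<and> c < 2 \<and> d < n \<and>
     (a = c \<and> (b = Suc d \<or> d = Suc b) \<or> b = d \<and> (a = Suc c \<or> c = Suc a))"
  by (auto simp: cart_E_def path_E_def path_V_def)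

lemma ladder_E_closed: "ladder_E n u v \<Longrightarrow> u \<in> ladder_V n \<and> v \<in> ladder_V n"
  by (cases u; cases v) (auto simp: ladder_E_iff ladder_V_eq)

lemma ladder_E_irrefl: "\<not> ladder_E n v v"
  by (cases v) (auto simp: ladder_E_iff)

lemma ladder_neighbour_iff:
  assumes "r < 2" "i < n"
  shows "ladder_E n z (r, i) \<longleftrightarrow>
    z \<in> ladder_V n \<and> (z = (1 - r, i) \<or> z = (r, i + 1) \<or> (0 < i \<and> z = (r, i - 1)))"
proof -
  obtain a b where z: "z = (a, b)" by fastforce
  have "a < 2 \<Longrightarrow> (a = Suc r \<or> r = Suc a) \<longleftrightarrow> a = 1 - r" using assms(1) by arith
  then show ?thesis using assms unfolding z ladder_E_iff ladder_V_eq by auto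
qed

lemma mem_trace_ladder:
  assumes "A \<subseteq> ladder_V n" "r < 2" "i < n"
  shows "z \<in> trace (ladder_E n) A (r, i) \<longleftrightarrow>
    z \<in> A \<and> (z = (1 - r, i) \<or> z = (r, i + 1) \<or> (0 < i \<and> z = (r, i - 1)))"
  using assms by (auto simp: trace_def ladder_neighbour_iff)

lemma trace_ladder_empty_iff:
  assumes A: "A \<subseteq> ladder_V n" and r: "r < 2" and i: "i < n"
  shows "trace (ladder_E n) A (r, i) = {} \<longleftrightarrow>
    (1 - r, i) \<notin> A \<and> (r, i + 1) \<notin> A \<and> \<not> (0 < i \<and> (r, i - 1) \<in> A)"
proof -
  note here = mem_trace_ladder[OF A r i]
  show ?thesis
  proof
    assume "trace (ladder_E n) A (r, i) = {}"
    then have "z \<notin> trace (ladder_E n) A (r, i)" for z by simp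
    from this[of "(1 - r, i)"] this[of "(r, i + 1)"] this[of "(r, i - 1)"]
    show "(1 - r, i) \<notin> A \<and> (r, i + 1) \<notin> A \<and> \<not> (0 < i \<and> (r, i - 1) \<in> A)"
      unfolding here by auto
  next
    assume none: "(1 - r, i) \<notin> A \<and> (r, i + 1) \<notin> A \<and> \<not> (0 < i \<and> (r, i - 1) \<in> A)"
    show "trace (ladder_E n) A (r, i) = {}"
    proof (rule equals0I)
      fix z assume "z \<in> trace (ladder_E n) A (r, i)"
      then show False using here[of z] none by auto
    qed
  qed
qed

lemma trace_ladder_along_eq_iff:
  assumes A: "A \<subseteq> ladder_V n" and r: "r < 2" and i: "i + 2 < n"
  shows "trace (ladder_E n) A (r, i) = trace (ladder_E n) A (r, i + 2) \<longleftrightarrow>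
      (1 - r, i) \<notin> A \<and> \<not> (0 < i \<and> (r, i - 1) \<in> A) \<and> (1 - r, i + 2) \<notin> A \<and> (r, i + 3) \<notin> A"
proof -
  have here: "z \<in> trace (ladder_E n) A (r, i) \<longleftrightarrow>
      z \<in> A \<and> (z = (1 - r, i) \<or> z = (r, i + 1) \<or> (0 < i \<and> z = (r, i - 1)))" for z
    using mem_trace_ladder[OF A r, of i z] i by simp
  have there: "z \<in> trace (ladder_E n) A (r, i + 2) \<longleftrightarrow>
      z \<in> A \<and> (z = (1 - r, i + 2) \<or> z = (r, i + 3) \<or> z = (r, i + 1))" for z
  proof -
    have "i + 2 + 1 = i + 3" "i + 2 - 1 = i + 1" by simp_all
    then show ?thesis using mem_trace_ladder[OF A r i, of z] by auto
  qed
  have r01: "r = 0 \<or> r = 1" using r by arith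
  show ?thesis
  proof
    assume eq: "trace (ladder_E n) A (r, i) = trace (ladder_E n) A (r, i + 2)"
    have "z \<in> trace (ladder_E n) A (r, i) \<longleftrightarrow> z \<in> trace (ladder_E n) A (r, i + 2)" for z
      by (simp add: eq)
    from this[of "(1 - r, i)"] this[of "(r, i - 1)"] this[of "(1 - r, i + 2)"] this[of "(r, i + 3)"]
    show "(1 - r, i) \<notin> A \<and> \<not> (0 < i \<and> (r, i - 1) \<in> A) \<and> (1 - r, i + 2) \<notin> A \<and> (r, i + 3) \<notin> A"
      unfolding here there using r01 by (elim disjE; cases i) simp_all
  next
    assume none: "(1 - r, i) \<notin> A \<and> \<not> (0 < i \<and> (r, i - 1) \<in> A) \<and> (1 - r, i + 2) \<notin> A \<and> (r, i + 3) \<notin> A"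
    show "trace (ladder_E n) A (r, i) = trace (ladder_E n) A (r, i + 2)"
    proof (rule set_eqI)
      fix z show "z \<in> trace (ladder_E n) A (r, i) \<longleftrightarrow> z \<in> trace (ladder_E n) A (r, i + 2)"
        using here[of z] there[of z] none r01 by (elim disjE; cases i) auto
    qed
  qed
qed

lemma trace_ladder_across_eq_iff:
  assumes A: "A \<subseteq> ladder_V n" and r: "r < 2" and i: "i + 1 < n"
  shows "trace (ladder_E n) A (r, i) = trace (ladder_E n) A (1 - r, i + 1) \<longleftrightarrow>
      \<not> (0 < i \<and> (r, i - 1) \<in> A) \<and> (1 - r, i + 2) \<notin> A"
proof -
  have r01: "r = 0 \<or> r = 1" using r by arith
  have here: "z \<in> trace (ladder_E n) A (r, i) \<longleftrightarrow>
      z \<in> A \<and> (z = (1 - r, i) \<or> z = (r, i + 1) \<or> (0 < i \<and> z = (r, i - 1)))" for z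
    using mem_trace_ladder[OF A r, of i z] i by simp
  have there: "z \<in> trace (ladder_E n) A (1 - r, i + 1) \<longleftrightarrow>
      z \<in> A \<and> (z = (r, i + 1) \<or> z = (1 - r, i + 2) \<or> z = (1 - r, i))" for z
    using mem_trace_ladder[OF A _ i, of "1 - r" z] r01 by auto
  show ?thesis
  proof
    assume eq: "trace (ladder_E n) A (r, i) = trace (ladder_E n) A (1 - r, i + 1)"
    have "z \<in> trace (ladder_E n) A (r, i) \<longleftrightarrow> z \<in> trace (ladder_E n) A (1 - r, i + 1)" for z
      by (simp add: eq)
    from this[of "(r, i - 1)"] this[of "(1 - r, i + 2)"]
    show "\<not> (0 < i \<and> (r, i - 1) \<in> A) \<and> (1 - r, i + 2) \<notin> A"
      unfolding here there using r01 by (elim disjE; cases i) simp_all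
  next
    assume none: "\<not> (0 < i \<and> (r, i - 1) \<in> A) \<and> (1 - r, i + 2) \<notin> A"
    show "trace (ladder_E n) A (r, i) = trace (ladder_E n) A (1 - r, i + 1)"
    proof (rule set_eqI)
      fix z show "z \<in> trace (ladder_E n) A (r, i) \<longleftrightarrow> z \<in> trace (ladder_E n) A (1 - r, i + 1)"
        using here[of z] there[of z] none r01 by (elim disjE; cases i) auto
    qed
  qed
qed

lemma ladder_common_neighbour:
  assumes "ladder_E n z (a, b)" "ladder_E n z (c, d)" "(a, b) \<noteq> (c, d)"
  shows "a = c \<and> (d = b + 2 \<or> b = d + 2) \<or> c = 1 - a \<and> (d = b + 1 \<or> b = d + 1)"
  using assms by (cases z) (auto simp: ladder_E_iff)

lemma ladder_inj_trace:
  assumes A: "A \<subseteq> ladder_V n"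
    and empty_unique: "\<And>x y. x \<in> ladder_V n - A \<Longrightarrow> y \<in> ladder_V n - A \<Longrightarrow>
      trace (ladder_E n) A x = {} \<Longrightarrow> trace (ladder_E n) A y = {} \<Longrightarrow> x = y"
    and along: "\<And>r i. (r, i) \<in> ladder_V n - A \<Longrightarrow> (r, i + 2) \<in> ladder_V n - A \<Longrightarrow>
      separated (ladder_E n) A (r, i) (r, i + 2)"
    and across: "\<And>r i. (r, i) \<in> ladder_V n - A \<Longrightarrow> (1 - r, i + 1) \<in> ladder_V n - A \<Longrightarrow>
      separated (ladder_E n) A (r, i) (1 - r, i + 1)"
  shows "inj_on (trace (ladder_E n) A) (ladder_V n - A)"
proof (rule inj_onI, rule ccontr)
  fix x y
  assume x: "x \<in> ladder_V n - A" and y: "y \<in> ladder_V n - A"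
    and eq: "trace (ladder_E n) A x = trace (ladder_E n) A y" and "x \<noteq> y"
  then obtain z where "z \<in> trace (ladder_E n) A x" using empty_unique by blast
  then have "ladder_E n z x" "ladder_E n z y" using eq by (auto simp: trace_def)
  moreover obtain a b c d where xy: "x = (a, b)" "y = (c, d)" by fastforce
  moreover have "a < 2" "c < 2" using x y xy by (auto simp: ladder_V_eq)
  ultimately have "a = c \<and> (d = b + 2 \<or> b = d + 2) \<or> c = 1 - a \<and> a = 1 - c \<and> (d = b + 1 \<or> b = d + 1)"
    using ladder_common_neighbour \<open>x \<noteq> y\<close> by fastforce
  then have "separated (ladder_E n) A x y \<or> separated (ladder_E n) A y x"
  proof (elim disjE conjE)
    assume "a = c" "d = b + 2"
    then show ?thesis using along x y unfolding xy by blast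
  next
    assume "a = c" "b = d + 2"
    then show ?thesis using along x y unfolding xy by blast
  next
    assume "c = 1 - a" "d = b + 1"
    then show ?thesis using across x y unfolding xy by blast
  next
    assume "a = 1 - c" "b = d + 1"
    then show ?thesis using across x y unfolding xy by blast
  qed
  then show False
    using eq \<open>z \<in> trace (ladder_E n) A x\<close> unfolding separated_def by blast
qed

section \<open>Column codes\<close>

(* Column k of the ladder is coded by the bitmask 0..3 of its rows in A; the codes 4 and 5
   stand for the (empty) columns to the left and to the right of the ladder. *)
definition in_col :: "nat \<Rightarrow> nat \<Rightarrow> bool" where
  "in_col c r \<longleftrightarrow> c < 4 \<and> odd (c div 2 ^ r)"

definition col :: "nat \<Rightarrow> (nat \<times> nat) set \<Rightarrow> int \<Rightarrow> nat" where
  "col n A k = (if k < 0 then 4 else if int n \<le> k then 5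
     else (if (0, nat k) \<in> A then 1 else 0) + (if (1, nat k) \<in> A then 2 else 0))"

lemma in_col_col: "r < 2 \<Longrightarrow> in_col (col n A k) r \<longleftrightarrow> 0 \<le> k \<and> k < int n \<and> (r, nat k) \<in> A"
  by (auto simp: in_col_def col_def less_2_cases_iff)

lemma col_less_4_iff: "col n A k < 4 \<longleftrightarrow> 0 \<le> k \<and> k < int n"
  by (simp add: col_def)

lemma in_col_col_offset:
  assumes "A \<subseteq> ladder_V n" "q < 2"
  shows "in_col (col n A (int i - 1)) q \<longleftrightarrow> 0 < i \<and> (q, i - 1) \<in> A"
    and "in_col (col n A (int i + int d)) q \<longleftrightarrow> (q, i + d) \<in> A"
proof -
  have mem: "(q, j) \<in> A \<Longrightarrow> j < n" for j using assms(1) by (auto simp: ladder_V_eq)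
  show "in_col (col n A (int i - 1)) q \<longleftrightarrow> 0 < i \<and> (q, i - 1) \<in> A"
    using assms(2) by (auto simp: in_col_col nat_diff_distrib dest: mem)
  show "in_col (col n A (int i + int d)) q \<longleftrightarrow> (q, i + d) \<in> A"
    using assms(2) by (auto simp: in_col_col nat_add_distrib dest: mem)
qed

(* c0, ..., c4 are the codes of columns i - 1, ..., i + 3 and r is the row of a vertex (r, i)
   outside A; the correspondence is col_codes_iff. *)
definition dominated_code :: "nat \<Rightarrow> nat \<Rightarrow> nat \<Rightarrow> nat \<Rightarrow> bool" where
  "dominated_code c0 c1 c2 r \<longleftrightarrow> in_col c0 r \<or> in_col c1 (1 - r) \<or> in_col c2 r"

definition along_code :: "nat \<Rightarrow> nat \<Rightarrow> nat \<Rightarrow> nat \<Rightarrow> nat \<Rightarrow> nat \<Rightarrow> bool" where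
  "along_code c0 c1 c2 c3 c4 r \<longleftrightarrow>
     (c3 < 4 \<and> \<not> in_col c3 r \<and> in_col c2 r \<longrightarrow>
        in_col c0 r \<or> in_col c1 (1 - r) \<or> in_col c3 (1 - r) \<or> in_col c4 r)"

definition across_code :: "nat \<Rightarrow> nat \<Rightarrow> nat \<Rightarrow> nat \<Rightarrow> nat \<Rightarrow> bool" where
  "across_code c0 c1 c2 c3 r \<longleftrightarrow>
     (c2 < 4 \<and> \<not> in_col c2 (1 - r) \<and> \<not> in_col c0 r \<and> \<not> in_col c3 (1 - r) \<longrightarrow>
        \<not> in_col c1 (1 - r) \<and> \<not> in_col c2 r)"

lemma col_codes_iff:
  assumes A: "A \<subseteq> ladder_V n" and x: "(r, i) \<in> ladder_V n - A"
  shows "dominated_code (col n A (int i - 1)) (col n A (int i)) (col n A (int i + 1)) r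
      \<longleftrightarrow> trace (ladder_E n) A (r, i) \<noteq> {}"
    and "along_code (col n A (int i - 1)) (col n A (int i)) (col n A (int i + 1))
        (col n A (int i + 2)) (col n A (int i + 3)) r
      \<longleftrightarrow> ((r, i + 2) \<in> ladder_V n - A \<longrightarrow> separated (ladder_E n) A (r, i) (r, i + 2))"
    and "across_code (col n A (int i - 1)) (col n A (int i)) (col n A (int i + 1))
        (col n A (int i + 2)) r
      \<longleftrightarrow> ((1 - r, i + 1) \<in> ladder_V n - A \<longrightarrow> separated (ladder_E n) A (r, i) (1 - r, i + 1))"
proof -
  have r: "r < 2" and i: "i < n" using x by (auto simp: ladder_V_eq)
  have r01: "r = 0 \<or> r = 1" using r by arith
  have real: "col n A (int i + int d) < 4 \<longleftrightarrow> i + d < n" for d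
    by (auto simp: col_less_4_iff)
  note after = in_col_col_offset(2)[OF A]
  note cols = in_col_col_offset(1)[OF A] after[where d = 0, simplified] after[where d = 1, simplified]
    after[where d = 2, simplified] after[where d = 3, simplified]
    real[where d = 1, simplified] real[where d = 2, simplified]
  have V: "(q, j) \<in> ladder_V n \<longleftrightarrow> q < 2 \<and> j < n" for q j by (simp add: ladder_V_eq)
  show "dominated_code (col n A (int i - 1)) (col n A (int i)) (col n A (int i + 1)) r
      \<longleftrightarrow> trace (ladder_E n) A (r, i) \<noteq> {}"
    unfolding trace_ladder_empty_iff[OF A r i] dominated_code_def using r01
    by (elim disjE) (auto simp: cols)
  show "along_code (col n A (int i - 1)) (col n A (int i)) (col n A (int i + 1))
        (col n A (int i + 2)) (col n A (int i + 3)) r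
      \<longleftrightarrow> ((r, i + 2) \<in> ladder_V n - A \<longrightarrow> separated (ladder_E n) A (r, i) (r, i + 2))"
    unfolding along_code_def separated_def
    using r01 trace_ladder_empty_iff[OF A r i] trace_ladder_along_eq_iff[OF A r]
    by (elim disjE) (auto simp: cols V)
  show "across_code (col n A (int i - 1)) (col n A (int i)) (col n A (int i + 1))
        (col n A (int i + 2)) r
      \<longleftrightarrow> ((1 - r, i + 1) \<in> ladder_V n - A \<longrightarrow> separated (ladder_E n) A (r, i) (1 - r, i + 1))"
    unfolding across_code_def separated_def
    using r01 trace_ladder_empty_iff[OF A r i] trace_ladder_across_eq_iff[OF A r]
    by (elim disjE) (auto simp: cols V)
qed

section \<open>The lower bound\<close>

definition col_card :: "nat \<Rightarrow> nat" where
  "col_card c = (if in_col c 0 then 1 else 0) + (if in_col c 1 then 1 else 0)"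

definition col_cost :: "nat \<Rightarrow> int" where
  "col_cost c = (if c < 4 then 4 * int (col_card c) - 3 else 0)"

(* Codes 4 only precede and codes 5 only follow the columns of the ladder, which has at least
   one column. *)
definition next_col_ok :: "nat \<Rightarrow> nat \<Rightarrow> bool" where
  "next_col_ok c d \<longleftrightarrow> (c = 5 \<longrightarrow> d = 5) \<and> (d = 4 \<longrightarrow> c = 4) \<and> \<not> (c = 4 \<and> d = 5)"

definition row_ok :: "nat \<Rightarrow> nat \<Rightarrow> nat \<Rightarrow> nat \<Rightarrow> nat \<Rightarrow> nat \<Rightarrow> bool" where
  "row_ok c0 c1 c2 c3 c4 r \<longleftrightarrow> in_col c1 r \<or>
     dominated_code c0 c1 c2 r \<and> along_code c0 c1 c2 c3 c4 r \<and> across_code c0 c1 c2 c3 r"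

definition ld_window :: "nat \<Rightarrow> nat \<Rightarrow> nat \<Rightarrow> nat \<Rightarrow> nat \<Rightarrow> bool" where
  "ld_window c0 c1 c2 c3 c4 \<longleftrightarrow>
     next_col_ok c0 c1 \<and> next_col_ok c1 c2 \<and> next_col_ok c2 c3 \<and> next_col_ok c3 c4 \<and>
     (c1 < 4 \<longrightarrow> row_ok c0 c1 c2 c3 c4 0 \<and> row_ok c0 c1 c2 c3 c4 1)"

lemma ld_window_col:
  assumes ld: "locating_dominating (ladder_V n) (ladder_E n) A" and "1 \<le> n"
  shows "ld_window (col n A (k - 1)) (col n A k) (col n A (k + 1)) (col n A (k + 2)) (col n A (k + 3))"
proof -
  have A: "A \<subseteq> ladder_V n" and inj: "inj_on (trace (ladder_E n) A) (ladder_V n - A)"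
    and dom: "\<And>x. x \<in> ladder_V n - A \<Longrightarrow> trace (ladder_E n) A x \<noteq> {}"
    using ld by (auto simp: locating_dominating_def)
  have sep: "separated (ladder_E n) A x y" if "x \<in> ladder_V n - A" "y \<in> ladder_V n - A" "x \<noteq> y" for x y
    using inj that by (auto simp: separated_def inj_on_def)
  have row: "row_ok (col n A (int i - 1)) (col n A (int i)) (col n A (int i + 1))
      (col n A (int i + 2)) (col n A (int i + 3)) r" if "r < 2" "i < n" for r i
  proof (cases "(r, i) \<in> A")
    case True
    then show ?thesis using that by (simp add: row_ok_def in_col_col)
  next
    case False
    then have x: "(r, i) \<in> ladder_V n - A" using that by (simp add: ladder_V_eq)
    then show ?thesis
      using dom[OF x] sep[OF x] unfolding row_ok_def col_codes_iff[OF A x] by auto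
  qed
  have order: "next_col_ok (col n A l) (col n A (l + 1))" for l
    using \<open>1 \<le> n\<close> by (auto simp: next_col_ok_def col_def)
  have rows: "row_ok (col n A (k - 1)) (col n A k) (col n A (k + 1)) (col n A (k + 2)) (col n A (k + 3)) r"
    if "col n A k < 4" "r < 2" for r
  proof -
    obtain i where "k = int i" "i < n"
      using \<open>col n A k < 4\<close> by (metis col_less_4_iff nonneg_int_cases of_nat_less_iff)
    then show ?thesis using row[OF \<open>r < 2\<close>] by simp
  qed
  show ?thesis
    unfolding ld_window_def using order[of "k - 1"] order[of k] order[of "k + 1"] order[of "k + 2"] rows
    by (simp add: add.assoc)
qed

(* potential a b c d is the least total col_cost of a sequence of codes, starting with 4 4 4 4
   and ending with a b c d, all of whose windows satisfy ld_window; 100 marks quadruples that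
   no such sequence reaches.  The table was computed by a shortest-path search; only the
   inequality potential_certificate is used. *)
definition potential_table :: "int list list" where
  "potential_table =
    [[-8, -4, -4, 0, 100, -5, -4, 0, 0, 4, 100, -1, -4, 0, 0, 4, 100, -1,
      0, 4, 4, 8, 100, 3, 100, 100, 100, 100, 100, 100, 100, 100, 100, 100, 100, -2],
     [-5, -1, -1, 3, 100, -2, -1, 3, 3, 7, 100, 2, -1, 3, 3, 7, 100, 2,
      3, 7, 7, 11, 100, 6, 100, 100, 100, 100, 100, 100, 100, 100, 100, 100, 100, 1],
     [-5, -1, -1, 3, 100, -2, -1, 3, 3, 7, 100, 2, -1, 3, 3, 7, 100, 2,
      3, 7, 7, 11, 100, 6, 100, 100, 100, 100, 100, 100, 100, 100, 100, 100, 100, 1],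
     [-2, 1, 1, 4, 100, 1, 0, 4, 4, 8, 100, 3, 0, 4, 4, 8, 100, 3,
      4, 8, 8, 12, 100, 7, 100, 100, 100, 100, 100, 100, 100, 100, 100, 100, 100, 2],
     [100, 100, 100, 100, 100, 100, 100, 100, 100, 100, 100, 100, 100, 100, 100, 100, 100, 100,
      100, 100, 100, 100, 100, 100, 100, 100, 100, 100, 100, 100, 100, 100, 100, 100, 100, 100],
     [100, 100, 100, 100, 100, 100, 100, 100, 100, 100, 100, 100, 100, 100, 100, 100, 100, 100,
      100, 100, 100, 100, 100, 100, 100, 100, 100, 100, 100, 100, 100, 100, 100, 100, 100, 1],
     [-6, -2, -2, 2, 100, -3, -4, 0, 0, 4, 100, -1, -2, 2, 2, 6, 100, 1,
      0, 4, 4, 8, 100, 3, 100, 100, 100, 100, 100, 100, 100, 100, 100, 100, 100, 0],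
     [-4, 0, 0, 4, 100, -1, 0, 4, 4, 8, 100, 3, 0, 4, 4, 8, 100, 3,
      4, 8, 8, 12, 100, 7, 100, 100, 100, 100, 100, 100, 100, 100, 100, 100, 100, 2],
     [-3, 1, 1, 5, 100, 0, 0, 4, 4, 8, 100, 3, 1, 5, 5, 9, 100, 4,
      4, 8, 8, 12, 100, 7, 100, 100, 100, 100, 100, 100, 100, 100, 100, 100, 100, 3],
     [0, 4, 4, 8, 100, 3, 4, 8, 8, 12, 100, 7, 4, 8, 8, 12, 100, 7,
      8, 12, 12, 16, 100, 11, 100, 100, 100, 100, 100, 100, 100, 100, 100, 100, 100, 6],
     [100, 100, 100, 100, 100, 100, 100, 100, 100, 100, 100, 100, 100, 100, 100, 100, 100, 100,
      100, 100, 100, 100, 100, 100, 100, 100, 100, 100, 100, 100, 100, 100, 100, 100, 100, 100],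
     [100, 100, 100, 100, 100, 100, 100, 100, 100, 100, 100, 100, 100, 100, 100, 100, 100, 100,
      100, 100, 100, 100, 100, 100, 100, 100, 100, 100, 100, 100, 100, 100, 100, 100, 100, 1],
     [-6, -2, -2, 2, 100, -3, -2, 2, 2, 6, 100, 1, -4, 0, 0, 4, 100, -1,
      0, 4, 4, 8, 100, 3, 100, 100, 100, 100, 100, 100, 100, 100, 100, 100, 100, 0],
     [-3, 1, 1, 5, 100, 0, 1, 5, 5, 9, 100, 4, 0, 4, 4, 8, 100, 3,
      4, 8, 8, 12, 100, 7, 100, 100, 100, 100, 100, 100, 100, 100, 100, 100, 100, 3],
     [-4, 0, 0, 4, 100, -1, 0, 4, 4, 8, 100, 3, 0, 4, 4, 8, 100, 3,
      4, 8, 8, 12, 100, 7, 100, 100, 100, 100, 100, 100, 100, 100, 100, 100, 100, 2],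
     [0, 4, 4, 8, 100, 3, 4, 8, 8, 12, 100, 7, 4, 8, 8, 12, 100, 7,
      8, 12, 12, 16, 100, 11, 100, 100, 100, 100, 100, 100, 100, 100, 100, 100, 100, 6],
     [100, 100, 100, 100, 100, 100, 100, 100, 100, 100, 100, 100, 100, 100, 100, 100, 100, 100,
      100, 100, 100, 100, 100, 100, 100, 100, 100, 100, 100, 100, 100, 100, 100, 100, 100, 100],
     [100, 100, 100, 100, 100, 100, 100, 100, 100, 100, 100, 100, 100, 100, 100, 100, 100, 100,
      100, 100, 100, 100, 100, 100, 100, 100, 100, 100, 100, 100, 100, 100, 100, 100, 100, 1],
     [-5, -1, -1, 3, 100, -2, -2, 2, 2, 6, 100, 1, -2, 2, 2, 6, 100, 1,
      1, 5, 5, 9, 100, 4, 100, 100, 100, 100, 100, 100, 100, 100, 100, 100, 100, 1],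
     [-3, 1, 1, 5, 100, 0, 1, 5, 5, 9, 100, 4, 1, 5, 5, 9, 100, 4,
      5, 9, 9, 13, 100, 8, 100, 100, 100, 100, 100, 100, 100, 100, 100, 100, 100, 3],
     [-3, 1, 1, 5, 100, 0, 1, 5, 5, 9, 100, 4, 1, 5, 5, 9, 100, 4,
      5, 9, 9, 13, 100, 8, 100, 100, 100, 100, 100, 100, 100, 100, 100, 100, 100, 3],
     [1, 5, 5, 9, 100, 4, 5, 9, 9, 13, 100, 8, 5, 9, 9, 13, 100, 8,
      9, 13, 13, 17, 100, 12, 100, 100, 100, 100, 100, 100, 100, 100, 100, 100, 100, 7],
     [100, 100, 100, 100, 100, 100, 100, 100, 100, 100, 100, 100, 100, 100, 100, 100, 100, 100,
      100, 100, 100, 100, 100, 100, 100, 100, 100, 100, 100, 100, 100, 100, 100, 100, 100, 100],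
     [100, 100, 100, 100, 100, 100, 100, 100, 100, 100, 100, 100, 100, 100, 100, 100, 100, 100,
      100, 100, 100, 100, 100, 100, 100, 100, 100, 100, 100, 100, 100, 100, 100, 100, 100, 2],
     [-9, -5, -5, -1, 100, -6, -5, -1, -1, 3, 100, -2, -5, -1, -1, 3, 100, -2,
      -1, 3, 3, 7, 100, 2, 100, 100, 100, 100, 100, 100, 100, 100, 100, 100, 100, -3],
     [-5, -1, -1, 3, 100, -2, -1, 3, 3, 7, 100, 2, -1, 3, 3, 7, 100, 2,
      3, 7, 7, 11, 100, 6, 100, 100, 100, 100, 100, 100, 100, 100, 100, 100, 100, 1],
     [-5, -1, -1, 3, 100, -2, -1, 3, 3, 7, 100, 2, -1, 3, 3, 7, 100, 2,
      3, 7, 7, 11, 100, 6, 100, 100, 100, 100, 100, 100, 100, 100, 100, 100, 100, 1],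
     [-1, 3, 3, 7, 100, 2, 3, 7, 7, 11, 100, 6, 3, 7, 7, 11, 100, 6,
      7, 11, 11, 15, 100, 10, 100, 100, 100, 100, 100, 100, 100, 100, 100, 100, 100, 5],
     [-6, -2, -2, 2, 100, -3, -2, 2, 2, 6, 100, 1, -2, 2, 2, 6, 100, 1,
      2, 6, 6, 10, 100, 5, -3, 1, 1, 5, 0, 100, 100, 100, 100, 100, 100, 100],
     [100, 100, 100, 100, 100, 100, 100, 100, 100, 100, 100, 100, 100, 100, 100, 100, 100, 100,
      100, 100, 100, 100, 100, 100, 100, 100, 100, 100, 100, 100, 100, 100, 100, 100, 100, 100],
     [100, 100, 100, 100, 100, 100, 100, 100, 100, 100, 100, 100, 100, 100, 100, 100, 100, 100,
      100, 100, 100, 100, 100, 100, 100, 100, 100, 100, 100, 100, 100, 100, 100, 100, 100, 100],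
     [100, 100, 100, 100, 100, 100, 100, 100, 100, 100, 100, 100, 100, 100, 100, 100, 100, 100,
      100, 100, 100, 100, 100, 100, 100, 100, 100, 100, 100, 100, 100, 100, 100, 100, 100, 100],
     [100, 100, 100, 100, 100, 100, 100, 100, 100, 100, 100, 100, 100, 100, 100, 100, 100, 100,
      100, 100, 100, 100, 100, 100, 100, 100, 100, 100, 100, 100, 100, 100, 100, 100, 100, 100],
     [100, 100, 100, 100, 100, 100, 100, 100, 100, 100, 100, 100, 100, 100, 100, 100, 100, 100,
      100, 100, 100, 100, 100, 100, 100, 100, 100, 100, 100, 100, 100, 100, 100, 100, 100, 100],
     [100, 100, 100, 100, 100, 100, 100, 100, 100, 100, 100, 100, 100, 100, 100, 100, 100, 100,
      100, 100, 100, 100, 100, 100, 100, 100, 100, 100, 100, 100, 100, 100, 100, 100, 100, 100],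
     [100, 100, 100, 100, 100, 100, 100, 100, 100, 100, 100, 100, 100, 100, 100, 100, 100, 100,
      100, 100, 100, 100, 100, 100, 100, 100, 100, 100, 100, 100, 100, 100, 100, 100, 100, 1]]"

definition potential :: "nat \<Rightarrow> nat \<Rightarrow> nat \<Rightarrow> nat \<Rightarrow> int" where
  "potential a b c d = potential_table ! (6 * a + b) ! (6 * c + d)"

lemma potential_certificate:
  "\<forall>c0\<in>set [0..<6]. \<forall>c1\<in>set [0..<6]. \<forall>c2\<in>set [0..<6]. \<forall>c3\<in>set [0..<6]. \<forall>c4\<in>set [0..<6].
     ld_window c0 c1 c2 c3 c4 \<longrightarrow> potential c1 c2 c3 c4 \<le> potential c0 c1 c2 c3 + col_cost c4"
  by code_simp

lemma potential_step:
  assumes "c0 < 6" "c1 < 6" "c2 < 6" "c3 < 6" "c4 < 6" "ld_window c0 c1 c2 c3 c4"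
  shows "potential c1 c2 c3 c4 \<le> potential c0 c1 c2 c3 + col_cost c4"
  using potential_certificate assms by simp

lemma potential_telescope:
  fixes f :: "int \<Rightarrow> nat"
  assumes windows: "\<And>k. ld_window (f (k - 1)) (f k) (f (k + 1)) (f (k + 2)) (f (k + 3))"
    and codes: "\<And>k. f k < 6"
  shows "potential (f (int m - 4)) (f (int m - 3)) (f (int m - 2)) (f (int m - 1))
    \<le> potential (f (-4)) (f (-3)) (f (-2)) (f (-1)) + (\<Sum>s<m. col_cost (f (int s)))"
proof (induction m)
  case 0
  then show ?case by simp
next
  case (Suc m)
  have "ld_window (f (int m - 4)) (f (int m - 3)) (f (int m - 2)) (f (int m - 1)) (f (int m))"
    using windows[of "int m - 3"] by (simp add: algebra_simps)
  then have "potential (f (int m - 3)) (f (int m - 2)) (f (int m - 1)) (f (int m))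
      \<le> potential (f (int m - 4)) (f (int m - 3)) (f (int m - 2)) (f (int m - 1)) + col_cost (f (int m))"
    by (rule potential_step[OF codes codes codes codes codes])
  moreover have "int (Suc m) - 4 = int m - 3" "int (Suc m) - 3 = int m - 2"
    "int (Suc m) - 2 = int m - 1" "int (Suc m) - 1 = int m"
    by simp_all
  ultimately show ?case using Suc.IH by simp
qed

lemma card_eq_sum_col_card:
  assumes "A \<subseteq> ladder_V n"
  shows "card A = (\<Sum>i<n. col_card (col n A (int i)))"
proof -
  have "card A = card (ladder_V n \<inter> A)" using assms by (simp add: Int_absorb1)
  also have "\<dots> = (\<Sum>x\<in>ladder_V n. if x \<in> A then 1 else 0)"
    by (simp add: sum.If_cases ladder_V_eq)
  also have "\<dots> = (\<Sum>r<2. \<Sum>i<n. if (r, i) \<in> A then 1 else 0)"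
    by (simp add: ladder_V_eq sum.cartesian_product)
  also have "\<dots> = (\<Sum>i<n. col_card (col n A (int i)))"
    by (simp add: numeral_2_eq_2 sum.distrib col_card_def in_col_col)
  finally show ?thesis .
qed

lemma locating_dominating_ladder_card:
  assumes ld: "locating_dominating (ladder_V n) (ladder_E n) A" and "1 \<le> n"
  shows "3 * n + 1 \<le> 4 * card A"
proof -
  have A: "A \<subseteq> ladder_V n" using ld by (simp add: locating_dominating_def)
  have "potential (col n A (int (n + 4) - 4)) (col n A (int (n + 4) - 3))
      (col n A (int (n + 4) - 2)) (col n A (int (n + 4) - 1))
    \<le> potential (col n A (-4)) (col n A (-3)) (col n A (-2)) (col n A (-1))
      + (\<Sum>s<n + 4. col_cost (col n A (int s)))"
    by (rule potential_telescope[OF ld_window_col[OF ld \<open>1 \<le> n\<close>]]) (simp add: col_def)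
  moreover have "potential 5 5 5 5 = 1" "potential 4 4 4 4 = 0"
    by (simp_all add: potential_def potential_table_def)
  moreover have "(\<Sum>s<n + 4. col_cost (col n A (int s))) = (\<Sum>s<n. col_cost (col n A (int s)))"
  proof -
    have "col_cost (col n A k) = 0" if "int n \<le> k" for k
      using that by (simp add: col_cost_def col_def)
    then show ?thesis by (simp add: eval_nat_numeral)
  qed
  moreover have "(\<Sum>s<n. col_cost (col n A (int s))) = 4 * int (card A) - 3 * int n"
    by (simp add: card_eq_sum_col_card[OF A] col_cost_def col_less_4_iff sum_subtractf
        sum_distrib_left)
  ultimately show ?thesis by (simp add: col_def)
qed

lemma adim_ladder_lower:
  assumes "1 \<le> n"
  shows "3 * n \<le> 4 * adim (ladder_V n) (ladder_E n) + 3"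
proof -
  obtain A where res: "adj_resolving (ladder_V n) (ladder_E n) A"
    and card_A: "card A = adim (ladder_V n) (ladder_E n)"
    using adim_attained[of "ladder_E n" "ladder_V n", OF ladder_E_closed ladder_E_irrefl] by blast
  have A: "A \<subseteq> ladder_V n" "inj_on (trace (ladder_E n) A) (ladder_V n - A)"
    using res adj_resolving_iff_inj_trace[of "ladder_E n" "ladder_V n", OF ladder_E_closed ladder_E_irrefl]
    by simp_all
  have "finite A" using A(1) finite_subset by (auto simp: ladder_V_eq)
  then obtain B where "locating_dominating (ladder_V n) (ladder_E n) B" "card B \<le> card A + 1"
    using locating_dominating_extension[OF A(1) _ A(2)] by blast
  with locating_dominating_ladder_card[OF _ assms] card_A show ?thesis by fastforce
qed

section \<open>The upper bound\<close>

definition padded :: "nat list \<Rightarrow> int \<Rightarrow> nat" where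
  "padded w k = (if k < 0 then 4 else if int (length w) \<le> k then 5 else w ! nat k)"

definition separating_at :: "nat list \<Rightarrow> nat \<Rightarrow> bool" where
  "separating_at w j \<longleftrightarrow> (\<forall>r<2. in_col (padded w (int j)) r \<or>
     along_code (padded w (int j - 1)) (padded w (int j)) (padded w (int j + 1))
       (padded w (int j + 2)) (padded w (int j + 3)) r \<and>
     across_code (padded w (int j - 1)) (padded w (int j)) (padded w (int j + 1))
       (padded w (int j + 2)) r)"

definition dominated_at :: "nat list \<Rightarrow> nat \<Rightarrow> nat \<Rightarrow> bool" where
  "dominated_at w j r \<longleftrightarrow> in_col (padded w (int j)) r \<or>
     dominated_code (padded w (int j - 1)) (padded w (int j)) (padded w (int j + 1)) r"

lemma padded_append_shift:
  "0 \<le> k \<Longrightarrow> padded (p @ w) (int (length p) + k) = padded w k"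
  by (auto simp: padded_def nth_append nat_add_distrib)

lemma padded_append_take:
  "k < int (length p) + 3 \<Longrightarrow> padded (p @ w) k = padded (p @ take 3 w) k"
  by (auto simp: padded_def nth_append min_def)

lemma in_col_padded_append_before:
  assumes "\<not> in_col (last p) 0" "\<not> in_col (last p) 1" "p \<noteq> []" "length p \<le> j" "r < 2"
  shows "in_col (padded (p @ w) (int j - 1)) r \<longleftrightarrow> in_col (padded w (int (j - length p) - 1)) r"
proof (cases "j = length p")
  case True
  obtain q a where p: "p = q @ [a]" using \<open>p \<noteq> []\<close> by (metis rev_exhaust)
  have "padded (p @ w) (int j - 1) = last p"
    using True unfolding p by (simp add: padded_def nth_append)
  moreover have "in_col (last p) r \<longleftrightarrow> in_col 4 r"
    using assms(1,2,5) by (auto simp: in_col_def less_2_cases_iff)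
  ultimately show ?thesis using True by (simp add: padded_def)
next
  case False
  then have e: "int j - 1 = int (length p) + (int (j - length p) - 1)" using assms(4) by simp
  have "0 \<le> int (j - length p) - 1" using False assms(4) by simp
  then show ?thesis unfolding e by (simp only: padded_append_shift)
qed

lemma padded_append_offset:
  assumes "length p \<le> j"
  shows "padded (p @ w) (int j + int d) = padded w (int (j - length p) + int d)"
proof -
  have e: "int j + int d = int (length p) + (int (j - length p) + int d)" using assms by simp
  show ?thesis unfolding e by (rule padded_append_shift) simp
qed

lemma separating_at_append:
  assumes "\<not> in_col (last p) 0" "\<not> in_col (last p) 1" "p \<noteq> []" "length p \<le> j"
  shows "separating_at (p @ w) j \<longleftrightarrow> separating_at w (j - length p)"
  using padded_append_offset[OF assms(4), of w 0] padded_append_offset[OF assms(4), of w 1]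
    padded_append_offset[OF assms(4), of w 2] padded_append_offset[OF assms(4), of w 3]
    in_col_padded_append_before[OF assms]
  by (simp add: separating_at_def along_code_def across_code_def)

lemma dominated_at_append:
  assumes "\<not> in_col (last p) 0" "\<not> in_col (last p) 1" "p \<noteq> []" "length p \<le> j" "r < 2"
  shows "dominated_at (p @ w) j r \<longleftrightarrow> dominated_at w (j - length p) r"
  using padded_append_offset[OF assms(4), of w 0] padded_append_offset[OF assms(4), of w 1]
    in_col_padded_append_before[OF assms]
  by (simp add: dominated_at_def dominated_code_def)

lemma separating_at_append_take:
  "j < length p \<Longrightarrow> separating_at (p @ w) j \<longleftrightarrow> separating_at (p @ take 3 w) j"
  using padded_append_take[of "int j - 1" p w] padded_append_take[of "int j" p w]
    padded_append_take[of "int j + 1" p w] padded_append_take[of "int j + 2" p w]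
    padded_append_take[of "int j + 3" p w]
  by (simp add: separating_at_def)

lemma dominated_at_append_take:
  "j < length p \<Longrightarrow> dominated_at (p @ w) j r \<longleftrightarrow> dominated_at (p @ take 3 w) j r"
  using padded_append_take[of "int j - 1" p w] padded_append_take[of "int j" p w]
    padded_append_take[of "int j + 1" p w]
  by (simp add: dominated_at_def)

(* The witness for n \<ge> 2 is witness_period repeated k times followed by the base word of
   length n - 8 k between 2 and 9.  Its only
   undominated vertex is (1, 8 k + 1), and the windows of witness_period @ w at positions
   below 8 see only the first three columns of w. *)
definition witness_period :: "nat list" where
  "witness_period = [1, 0, 3, 0, 2, 0, 3, 0]"

definition witness_base :: "nat list list" where
  "witness_base = [[], [], [1, 1], [1, 0, 1], [1, 0, 1, 1], [1, 0, 1, 0, 3], [1, 0, 1, 0, 3, 1],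
     [1, 0, 1, 0, 3, 0, 2], [1, 0, 1, 0, 3, 0, 2, 2], [1, 0, 1, 0, 3, 0, 2, 0, 3]]"

fun witness :: "nat \<Rightarrow> nat list" where
  "witness n = (if n < 10 then witness_base ! n else witness_period @ witness (n - 8))"

declare witness.simps [simp del]

definition witness_inv :: "nat \<Rightarrow> nat list \<Rightarrow> bool" where
  "witness_inv n w \<longleftrightarrow> length w = n \<and> take 3 w \<in> {[1, 1], [1, 0, 1], [1, 0, 3]} \<and>
     (\<forall>c\<in>set w. c < 4) \<and> (\<forall>j<n. separating_at w j) \<and>
     (\<forall>j<n. \<forall>r<2. dominated_at w j r \<or> (r, j) = (1, 8 * ((n - 2) div 8) + 1)) \<and>
     sum_list (map col_card w) = (3 * n + 2) div 4"

(* code_simp evaluates quantifiers over set [0..<n] much faster than the bounded \<forall>j<n. *)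
lemma all_less_iff_upt: "(\<forall>j<n. P j) \<longleftrightarrow> (\<forall>j\<in>set [0..<n]. P j)"
  by auto

lemma witness_base_inv: "\<forall>n\<in>set [2..<10]. witness_inv n (witness_base ! n)"
  unfolding witness_inv_def separating_at_def all_less_iff_upt by code_simp

lemma witness_period_prefix:
  "\<forall>t\<in>{[1, 1], [1, 0, 1], [1, 0, 3]}. \<forall>j<8.
     separating_at (witness_period @ t) j \<and> (\<forall>r<2. dominated_at (witness_period @ t) j r)"
  unfolding separating_at_def all_less_iff_upt by code_simp

lemma
  assumes prefix: "take 3 w \<in> {[1, 1], [1, 0, 1], [1, 0, 3]}"
  shows separating_at_period_append:
      "separating_at (witness_period @ w) j \<longleftrightarrow> j < 8 \<or> separating_at w (j - 8)"
    and dominated_at_period_append: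
      "r < 2 \<Longrightarrow> dominated_at (witness_period @ w) j r \<longleftrightarrow> j < 8 \<or> dominated_at w (j - 8) r"
proof -
  have P: "\<not> in_col (last witness_period) 0" "\<not> in_col (last witness_period) 1"
    "witness_period \<noteq> []" "length witness_period = 8"
    by (simp_all add: witness_period_def in_col_def)
  show "separating_at (witness_period @ w) j \<longleftrightarrow> j < 8 \<or> separating_at w (j - 8)"
  proof (cases "j < 8")
    case True
    then show ?thesis
      using witness_period_prefix prefix separating_at_append_take[of j witness_period w] P(4) by auto
  next
    case False
    then show ?thesis using separating_at_append[OF P(1-3), of j w] P(4) by simp
  qed
  show "dominated_at (witness_period @ w) j r \<longleftrightarrow> j < 8 \<or> dominated_at w (j - 8) r" if "r < 2"
  proof (cases "j < 8")
    case True
    then show ?thesis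
      using witness_period_prefix prefix dominated_at_append_take[of j witness_period w r] P(4) that
      by auto
  next
    case False
    then show ?thesis using dominated_at_append[OF P(1-3) _ that, of j w] P(4) by simp
  qed
qed

lemma witness_inv_period:
  assumes inv: "witness_inv m w" and "2 \<le> m"
  shows "witness_inv (m + 8) (witness_period @ w)"
proof -
  have prefix: "take 3 w \<in> {[1, 1], [1, 0, 1], [1, 0, 3]}" and len: "length w = m"
    and sep_w: "\<forall>j<m. separating_at w j"
    and dom_w: "\<forall>j<m. \<forall>r<2. dominated_at w j r \<or> (r, j) = (1, 8 * ((m - 2) div 8) + 1)"
    using inv by (simp_all add: witness_inv_def)
  have sep: "separating_at (witness_period @ w) j" if "j < m + 8" for j
  proof -
    have "j < 8 \<or> j - 8 < m" using that by arith
    then show ?thesis using separating_at_period_append[OF prefix, of j] sep_w by auto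
  qed
  have dom: "dominated_at (witness_period @ w) j r \<or> (r, j) = (1, 8 * ((m + 8 - 2) div 8) + 1)"
    if "j < m + 8" "r < 2" for j r
  proof (cases "j < 8")
    case True
    then show ?thesis using dominated_at_period_append[OF prefix that(2)] by simp
  next
    case False
    then have "dominated_at w (j - 8) r \<or> (r, j - 8) = (1, 8 * ((m - 2) div 8) + 1)"
      using dom_w that by simp
    moreover have "(m + 8 - 2) div 8 = (m - 2) div 8 + 1" using \<open>2 \<le> m\<close> by simp
    ultimately show ?thesis using False dominated_at_period_append[OF prefix that(2)] by auto
  qed
  have "sum_list (map col_card witness_period) = 6"
    by (simp add: witness_period_def col_card_def in_col_def)
  then show ?thesis
    using inv sep dom by (auto simp: witness_inv_def witness_period_def)
qed

lemma witness_inv_witness: "2 \<le> n \<Longrightarrow> witness_inv n (witness n)"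
proof (induction n rule: less_induct)
  case (less n)
  show ?case
  proof (cases "n < 10")
    case True
    then have "n \<in> set [2..<10]" using less.prems by (simp only: set_upt atLeastLessThan_iff)
    then have "witness_inv n (witness_base ! n)" using witness_base_inv by blast
    then show ?thesis using True by (simp add: witness.simps)
  next
    case False
    then have "witness_inv (n - 8) (witness (n - 8))" using less.IH[of "n - 8"] by simp
    then have "witness_inv (n - 8 + 8) (witness_period @ witness (n - 8))"
      using False by (intro witness_inv_period) simp_all
    then show ?thesis using False by (simp add: witness.simps)
  qed
qed

definition word_set :: "nat list \<Rightarrow> (nat \<times> nat) set" where
  "word_set w = {(r, j). r < 2 \<and> j < length w \<and> in_col (w ! j) r}"

lemma col_word_set:
  assumes "\<forall>c\<in>set w. c < 4"
  shows "col (length w) (word_set w) k = padded w k"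
proof -
  have code: "(if in_col c 0 then 1 else 0) + (if in_col c 1 then 2 else 0) = c" if "c < 4" for c
  proof -
    have "c = 0 \<or> c = 1 \<or> c = 2 \<or> c = 3" using that by arith
    then show ?thesis by (elim disjE) (simp_all add: in_col_def)
  qed
  show ?thesis
  proof (cases "0 \<le> k \<and> k < int (length w)")
    case True
    then have "w ! nat k < 4" using assms by (simp add: nat_less_iff)
    then show ?thesis using True code[of "w ! nat k"]
      by (simp add: col_def padded_def word_set_def nat_less_iff)
  next
    case False
    then show ?thesis by (auto simp: col_def padded_def)
  qed
qed

lemma card_word_set:
  assumes "\<forall>c\<in>set w. c < 4"
  shows "card (word_set w) = sum_list (map col_card w)"
proof -
  have "word_set w \<subseteq> ladder_V (length w)" by (auto simp: word_set_def ladder_V_eq)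
  then have "card (word_set w) = (\<Sum>i<length w. col_card (padded w (int i)))"
    by (simp add: card_eq_sum_col_card col_word_set[OF assms])
  also have "\<dots> = sum_list (map col_card w)"
    by (simp add: padded_def sum_list_sum_nth atLeast0LessThan)
  finally show ?thesis .
qed

lemma word_set_resolving:
  assumes codes: "\<forall>c\<in>set w. c < 4" and sep: "\<forall>j<length w. separating_at w j"
    and dom: "\<forall>j<length w. \<forall>r<2. dominated_at w j r \<or> (r, j) = e"
  shows "adj_resolving (ladder_V (length w)) (ladder_E (length w)) (word_set w)"
proof -
  let ?n = "length w" and ?A = "word_set w"
  have A: "?A \<subseteq> ladder_V ?n" by (auto simp: word_set_def ladder_V_eq)
  note col = col_word_set[OF codes]
  have outside: "r < 2 \<and> i < ?n \<and> \<not> in_col (padded w (int i)) r" if "(r, i) \<in> ladder_V ?n - ?A" for r i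
    using that by (simp add: ladder_V_eq word_set_def padded_def)
  have undominated: "(r, i) = e"
    if x: "(r, i) \<in> ladder_V ?n - ?A" and "trace (ladder_E ?n) ?A (r, i) = {}" for r i
  proof -
    have "\<not> dominated_at w i r"
      using col_codes_iff(1)[OF A x] that(2) outside[OF x] by (simp add: dominated_at_def col)
    then show ?thesis using dom outside[OF x] by blast
  qed
  have "inj_on (trace (ladder_E ?n) ?A) (ladder_V ?n - ?A)"
  proof (rule ladder_inj_trace[OF A])
    fix x y assume "x \<in> ladder_V ?n - ?A" "y \<in> ladder_V ?n - ?A"
      and "trace (ladder_E ?n) ?A x = {}" "trace (ladder_E ?n) ?A y = {}"
    then show "x = y" using undominated by (metis surj_pair)
  next
    fix r i assume x: "(r, i) \<in> ladder_V ?n - ?A"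
    then have "along_code (padded w (int i - 1)) (padded w (int i)) (padded w (int i + 1))
        (padded w (int i + 2)) (padded w (int i + 3)) r"
      "across_code (padded w (int i - 1)) (padded w (int i)) (padded w (int i + 1))
        (padded w (int i + 2)) r"
      using sep outside[OF x] by (auto simp: separating_at_def)
    then show "(r, i + 2) \<in> ladder_V ?n - ?A \<Longrightarrow> separated (ladder_E ?n) ?A (r, i) (r, i + 2)"
      and "(1 - r, i + 1) \<in> ladder_V ?n - ?A \<Longrightarrow> separated (ladder_E ?n) ?A (r, i) (1 - r, i + 1)"
      using col_codes_iff(2,3)[OF A x] by (simp_all add: col)
  qed
  then show ?thesis
    using A adj_resolving_iff_inj_trace[of "ladder_E ?n" "ladder_V ?n", OF ladder_E_closed ladder_E_irrefl]
    by simp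
qed

lemma adim_ladder_upper:
  assumes "2 \<le> n"
  shows "adim (ladder_V n) (ladder_E n) \<le> (3 * n + 2) div 4"
proof -
  have inv: "witness_inv n (witness n)" using witness_inv_witness[OF assms] .
  then have "adj_resolving (ladder_V n) (ladder_E n) (word_set (witness n))"
    using word_set_resolving[of "witness n"] by (auto simp: witness_inv_def)
  then have "adim (ladder_V n) (ladder_E n) \<le> card (word_set (witness n))"
    by (rule adim_le_card)
  also have "\<dots> = (3 * n + 2) div 4"
    using inv card_word_set[of "witness n"] by (simp add: witness_inv_def)
  finally show ?thesis .
qed

lemma ceiling_three_quarters: "\<lceil>(3 * real n - 1) / 4\<rceil> = int ((3 * n + 2) div 4)"
proof (rule ceiling_unique)
  define q where "q = (3 * n + 2) div 4"
  have "4 * q \<le> 3 * n + 2" "3 * n \<le> 4 * q + 1" unfolding q_def by linarith+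
  then have "4 * real q \<le> 3 * real n + 2" "3 * real n \<le> 4 * real q + 1" by linarith+
  then show "real_of_int (int q) - 1 < (3 * real n - 1) / 4" "(3 * real n - 1) / 4 \<le> real_of_int (int q)"
    by simp_all
qed

theorem theorem1p11:
  fixes n :: nat
  assumes "n \<ge> 2"
  shows "\<lceil>(3 * real n - 1) / 4\<rceil> - 1
           \<le> int (adim (cart_V (path_V 2) (path_V n)) (cart_E (path_V 2) (path_E 2) (path_V n) (path_E n)))
       \<and> int (adim (cart_V (path_V 2) (path_V n)) (cart_E (path_V 2) (path_E 2) (path_V n) (path_E n)))
           \<le> \<lceil>(3 * real n - 1) / 4\<rceil>"
proof -
  have "3 * n \<le> 4 * adim (ladder_V n) (ladder_E n) + 3" using assms by (intro adim_ladder_lower) simp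
  then have "(3 * n + 2) div 4 \<le> adim (ladder_V n) (ladder_E n) + 1" by linarith
  moreover have "adim (ladder_V n) (ladder_E n) \<le> (3 * n + 2) div 4" using assms by (rule adim_ladder_upper)
  ultimately show ?thesis unfolding ceiling_three_quarters by linarith
qed

end
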